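(* Let $n\ge 1$ and $m\ge 1$. For any $\textsc{P}$-layers $L_1,\dots,L_m$ and any $\textsc{C}$-layers $C_1,\dots,C_m$ on $n$ qubits, there exist a $\textsc{P}$-layer $L'$, a $\textsc{CZ}$-layer $Z'$ and a $\textsc{C}$-layer $C'$ on $n$ qubits such that $$C_m L_m C_{m-1}L_{m-1}\cdots C_1 L_1 \;=\; C'\,Z'\,L'$$ as exact unitary matrices. In stage notation: $(\text{-P-C-})^m = \text{-P-CZ-C-}$.
   Context: Gates: $\textsc{H}=\frac{1}{\sqrt2}\begin{pmatrix}1&1\\1&-1\end{pmatrix}$, $\textsc{P}=\mathrm{diag}(1,i)$, $\textsc{CNOT}|a,b\rangle=|a,a\oplus b\rangle$, $\textsc{CZ}|a,b\rangle=(-1)^{ab}|a,b\rangle$. Layers on $n$ qubits: an $\textsc{H}$-layer is $\bigotimes_{j=1}^n \textsc{H}^{b_j}$ with $b_j\in\{0,1\}$; a $\textsc{P}$-layer is $\bigotimes_{j=1}^n \textsc{P}^{a_j}$ with $a_j\in\{0,1,2,3\}$; a $\textsc{C}$-layer is any unitary implemented by a circuit of $\textsc{CNOT}$ gates (equivalently $|x\rangle\mapsto|Ax\rangle$ for an invertible $n\times n$ matrix $A$ over $\mathbb F_2$); a $\textsc{CZ}$-layer is any product of $\textsc{CZ}$ gates (acting on arbitrary pairs of the $n$ qubits). Stage notation such as -X-Y-Z- denotes a circuit in which stage X is applied first, then Y, then Z, i.e. the operator product $ZYX$. *)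

theory Defs
  imports Complex_Main
begin

text \<open>Operators on n qubits are represented as matrices indexed by computational
basis states. A basis state is a bit vector x :: nat => bool with x j = False for
all j >= n (bit j is the state of qubit j). Entry A x y is the coefficient of
the basis state x in the image of the basis state y.\<close>

type_synonym op = "(nat \<Rightarrow> bool) \<Rightarrow> (nat \<Rightarrow> bool) \<Rightarrow> complex"

definition basis :: "nat \<Rightarrow> (nat \<Rightarrow> bool) set" where
  "basis n = {x. \<forall>j\<ge>n. \<not> x j}"

definition op_mult :: "nat \<Rightarrow> op \<Rightarrow> op \<Rightarrow> op" where
  "op_mult n A B = (\<lambda>x y. \<Sum>z\<in>basis n. A x z * B z y)"

definition op_id :: op where
  "op_id = (\<lambda>x y. if x = y then 1 else 0)"

definition op_eq :: "nat \<Rightarrow> op \<Rightarrow> op \<Rightarrow> bool" where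
  "op_eq n A B \<longleftrightarrow> (\<forall>x\<in>basis n. \<forall>y\<in>basis n. A x y = B x y)"

text \<open>P-layer: tensor product of P^(a j), P = diag(1,i).\<close>
definition P_layer :: "nat \<Rightarrow> (nat \<Rightarrow> nat) \<Rightarrow> op" where
  "P_layer n a = (\<lambda>x y. if x = y then (\<Prod>j<n. \<i> ^ (a j * (if x j then 1 else 0))) else 0)"

definition is_P_layer :: "nat \<Rightarrow> op \<Rightarrow> bool" where
  "is_P_layer n U \<longleftrightarrow> (\<exists>a. (\<forall>j<n. a j < 4) \<and> U = P_layer n a)"

definition CNOT :: "nat \<Rightarrow> nat \<Rightarrow> op" where
  "CNOT c t = (\<lambda>x y. if x = y(t := (y t \<noteq> y c)) then 1 else 0)"

definition CZ :: "nat \<Rightarrow> nat \<Rightarrow> op" where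
  "CZ j k = (\<lambda>x y. if x = y then (if x j \<and> x k then -1 else 1) else 0)"

text \<open>Product of a list of gates; the head of the list is applied last.\<close>
fun gate_prod :: "nat \<Rightarrow> op list \<Rightarrow> op" where
  "gate_prod n [] = op_id"
| "gate_prod n (G # Gs) = op_mult n G (gate_prod n Gs)"

definition is_C_layer :: "nat \<Rightarrow> op \<Rightarrow> bool" where
  "is_C_layer n U \<longleftrightarrow> (\<exists>gs. (\<forall>(c,t)\<in>set gs. c < n \<and> t < n \<and> c \<noteq> t)
      \<and> U = gate_prod n (map (\<lambda>(c,t). CNOT c t) gs))"

definition is_CZ_layer :: "nat \<Rightarrow> op \<Rightarrow> bool" where
  "is_CZ_layer n U \<longleftrightarrow> (\<exists>gs. (\<forall>(j,k)\<in>set gs. j < n \<and> k < n \<and> j \<noteq> k)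
      \<and> U = gate_prod n (map (\<lambda>(j,k). CZ j k) gs))"

text \<open>(-P-C-)^k with layers L 0, C 0, ..., L (k-1), C (k-1):
  the operator C_(k-1) L_(k-1) ... C_0 L_0.\<close>
fun PC_prod :: "nat \<Rightarrow> (nat \<Rightarrow> op) \<Rightarrow> (nat \<Rightarrow> op) \<Rightarrow> nat \<Rightarrow> op" where
  "PC_prod n L C 0 = op_id"
| "PC_prod n L C (Suc k) = op_mult n (C k) (op_mult n (L k) (PC_prod n L C k))"

end

theory Submission
  imports Defs
begin

text \<open>Every layer is a monomial matrix: a diagonal phase followed by a permutation of basis
states. P- and CZ-layers are diagonal, with phases \<open>\<i>^(a x\<^sub>j)\<close> and \<open>(-1)^(x\<^sub>j x\<^sub>k)\<close>,
and a CNOT circuit permutes basis states by an invertible GF(2)-linear map. Hence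
\<open>C\<^sub>m L\<^sub>m \<cdots> C\<^sub>1 L\<^sub>1\<close> is the CNOT circuit \<open>C\<^sub>m \<cdots> C\<^sub>1\<close> after a diagonal phase,
namely the product of the \<open>L\<^sub>k\<close> pulled back along CNOT circuits. Phases of the form
"P-layer times CZ-layer" are closed under products and under such pull-backs, because
\<open>\<i>^(x \<oplus> y) = \<i>^x \<i>^y (-1)^(x y)\<close> and \<open>(x \<oplus> y) z = x z \<oplus> y z\<close>; so the final phase
is \<open>Z' L'\<close>.\<close>

section \<open>Monomial operators\<close>

definition monomial_op :: "((nat \<Rightarrow> bool) \<Rightarrow> (nat \<Rightarrow> bool)) \<Rightarrow> ((nat \<Rightarrow> bool) \<Rightarrow> complex) \<Rightarrow> op" where
  "monomial_op \<sigma> \<phi> = (\<lambda>x y. if x = \<sigma> y then \<phi> y else 0)"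

lemma finite_basis: "finite (basis n)"
proof -
  have "basis n \<subseteq> (\<lambda>S j. j \<in> S) ` Pow {..<n}"
  proof
    fix x assume "x \<in> basis n"
    then have "{j. x j} \<subseteq> {..<n}" unfolding basis_def by (auto simp: not_le[symmetric])
    moreover have "x = (\<lambda>j. j \<in> {j. x j})" by simp
    ultimately show "x \<in> (\<lambda>S j. j \<in> S) ` Pow {..<n}" by blast
  qed
  then show ?thesis by (rule finite_subset) simp
qed

lemma op_eq_refl: "op_eq n A A"
  by (simp add: op_eq_def)

lemma op_eq_sym: "op_eq n A B \<Longrightarrow> op_eq n B A"
  by (simp add: op_eq_def)

lemma op_eq_trans: "op_eq n A B \<Longrightarrow> op_eq n B C \<Longrightarrow> op_eq n A C"
  by (simp add: op_eq_def)

lemma op_eq_op_mult_cong: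
  "op_eq n A A' \<Longrightarrow> op_eq n B B' \<Longrightarrow> op_eq n (op_mult n A B) (op_mult n A' B')"
  unfolding op_eq_def op_mult_def by (auto intro!: sum.cong)

lemma op_eq_monomial_op_cong:
  "\<forall>y\<in>basis n. \<phi> y = \<psi> y \<Longrightarrow> op_eq n (monomial_op \<sigma> \<phi>) (monomial_op \<sigma> \<psi>)"
  by (simp add: op_eq_def monomial_op_def)

lemma op_eq_op_mult_monomial_op:
  assumes "\<forall>y\<in>basis n. \<tau> y \<in> basis n"
  shows "op_eq n (op_mult n (monomial_op \<sigma> \<phi>) (monomial_op \<tau> \<psi>))
                 (monomial_op (\<sigma> \<circ> \<tau>) (\<lambda>y. \<phi> (\<tau> y) * \<psi> y))"
  unfolding op_eq_def
proof (intro ballI)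
  fix x y assume "y \<in> basis n"
  have "op_mult n (monomial_op \<sigma> \<phi>) (monomial_op \<tau> \<psi>) x y =
     (\<Sum>z\<in>basis n. if z = \<tau> y then (if x = \<sigma> z then \<phi> z else 0) * \<psi> y else 0)"
    unfolding op_mult_def monomial_op_def by (rule sum.cong) auto
  also have "\<dots> = (if x = \<sigma> (\<tau> y) then \<phi> (\<tau> y) else 0) * \<psi> y"
    using assms \<open>y \<in> basis n\<close> finite_basis by simp
  finally show "op_mult n (monomial_op \<sigma> \<phi>) (monomial_op \<tau> \<psi>) x y =
      monomial_op (\<sigma> \<circ> \<tau>) (\<lambda>y. \<phi> (\<tau> y) * \<psi> y) x y"
    by (simp add: monomial_op_def)
qed

definition valid_pairs :: "nat \<Rightarrow> (nat \<times> nat) list \<Rightarrow> bool" where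
  "valid_pairs n gs \<longleftrightarrow> (\<forall>(c,t)\<in>set gs. c < n \<and> t < n \<and> c \<noteq> t)"

definition cnot_map :: "nat \<Rightarrow> nat \<Rightarrow> (nat \<Rightarrow> bool) \<Rightarrow> (nat \<Rightarrow> bool)" where
  "cnot_map c t y = y(t := (y t \<noteq> y c))"

fun cnot_circuit_map :: "(nat \<times> nat) list \<Rightarrow> (nat \<Rightarrow> bool) \<Rightarrow> (nat \<Rightarrow> bool)" where
  "cnot_circuit_map [] = id"
| "cnot_circuit_map ((c,t) # gs) = cnot_map c t \<circ> cnot_circuit_map gs"

definition cz_sign :: "nat \<Rightarrow> nat \<Rightarrow> (nat \<Rightarrow> bool) \<Rightarrow> complex" where
  "cz_sign j k y = (if y j \<and> y k then -1 else 1)"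

fun cz_circuit_sign :: "(nat \<times> nat) list \<Rightarrow> (nat \<Rightarrow> bool) \<Rightarrow> complex" where
  "cz_circuit_sign [] y = 1"
| "cz_circuit_sign ((j,k) # zs) y = cz_sign j k y * cz_circuit_sign zs y"

definition P_phase :: "nat \<Rightarrow> (nat \<Rightarrow> nat) \<Rightarrow> (nat \<Rightarrow> bool) \<Rightarrow> complex" where
  "P_phase n a y = (\<Prod>j<n. \<i> ^ (a j * (if y j then 1 else 0)))"

lemma cnot_map_basis: "t < n \<Longrightarrow> y \<in> basis n \<Longrightarrow> cnot_map c t y \<in> basis n"
  unfolding basis_def cnot_map_def by auto

lemma cnot_circuit_map_basis:
  "valid_pairs n gs \<Longrightarrow> y \<in> basis n \<Longrightarrow> cnot_circuit_map gs y \<in> basis n"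
  by (induction gs arbitrary: y rule: cnot_circuit_map.induct)
     (auto simp: valid_pairs_def intro!: cnot_map_basis)

lemma cnot_circuit_map_append:
  "cnot_circuit_map (gs @ hs) = cnot_circuit_map gs \<circ> cnot_circuit_map hs"
  by (induction gs rule: cnot_circuit_map.induct) auto

lemma C_layer_monomial:
  assumes "valid_pairs n gs"
  shows "op_eq n (gate_prod n (map (\<lambda>(c,t). CNOT c t) gs)) (monomial_op (cnot_circuit_map gs) (\<lambda>_. 1))"
  using assms
proof (induction gs rule: cnot_circuit_map.induct)
  case 1
  then show ?case by (simp add: op_eq_def op_id_def monomial_op_def)
next
  case (2 c t gs)
  then have gs: "valid_pairs n gs" by (simp add: valid_pairs_def)
  have "CNOT c t = monomial_op (cnot_map c t) (\<lambda>_. 1)"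
    by (auto simp: CNOT_def monomial_op_def cnot_map_def fun_eq_iff)
  then have "op_eq n (gate_prod n (map (\<lambda>(c,t). CNOT c t) ((c,t) # gs)))
      (op_mult n (monomial_op (cnot_map c t) (\<lambda>_. 1)) (monomial_op (cnot_circuit_map gs) (\<lambda>_. 1)))"
    using op_eq_op_mult_cong[OF op_eq_refl "2.IH"[OF gs]] by simp
  moreover have "op_eq n (op_mult n (monomial_op (cnot_map c t) (\<lambda>_. 1)) (monomial_op (cnot_circuit_map gs) (\<lambda>_. 1)))
      (monomial_op (cnot_circuit_map ((c,t) # gs)) (\<lambda>_. 1))"
    using op_eq_op_mult_monomial_op[of n "cnot_circuit_map gs" "cnot_map c t" "\<lambda>_. 1" "\<lambda>_. 1"]
      cnot_circuit_map_basis[OF gs] by simp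
  ultimately show ?case by (rule op_eq_trans)
qed

lemma CZ_layer_monomial:
  "op_eq n (gate_prod n (map (\<lambda>(j,k). CZ j k) zs)) (monomial_op id (cz_circuit_sign zs))"
proof (induction zs)
  case Nil
  then show ?case by (simp add: op_eq_def op_id_def monomial_op_def)
next
  case (Cons jk zs)
  obtain j k where jk: "jk = (j,k)" by (cases jk)
  have CZ: "CZ j k = monomial_op id (cz_sign j k)"
    by (auto simp: CZ_def monomial_op_def cz_sign_def fun_eq_iff)
  have sign: "cz_circuit_sign (jk # zs) = (\<lambda>y. cz_sign j k y * cz_circuit_sign zs y)"
    using jk by auto
  have "op_eq n (gate_prod n (map (\<lambda>(j,k). CZ j k) (jk # zs)))
      (op_mult n (monomial_op id (cz_sign j k)) (monomial_op id (cz_circuit_sign zs)))"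
    using op_eq_op_mult_cong[OF op_eq_refl Cons.IH, of "CZ j k"] CZ jk
    by (simp only: list.map prod.case gate_prod.simps)
  moreover have "op_eq n (op_mult n (monomial_op id (cz_sign j k)) (monomial_op id (cz_circuit_sign zs)))
      (monomial_op id (cz_circuit_sign (jk # zs)))"
    using op_eq_op_mult_monomial_op[of n id id "cz_sign j k" "cz_circuit_sign zs"] sign by simp
  ultimately show ?case by (rule op_eq_trans)
qed

lemma P_layer_monomial: "P_layer n a = monomial_op id (P_phase n a)"
  by (auto simp: P_layer_def monomial_op_def P_phase_def fun_eq_iff)

section \<open>Phases of the form P-layer times CZ-layer\<close>

definition PCZ_phase :: "nat \<Rightarrow> ((nat \<Rightarrow> bool) \<Rightarrow> complex) \<Rightarrow> bool" where
  "PCZ_phase n \<phi> \<longleftrightarrow> (\<exists>a zs. (\<forall>j<n. a j < 4) \<and> valid_pairs n zs \<and>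
      (\<forall>y\<in>basis n. \<phi> y = P_phase n a y * cz_circuit_sign zs y))"

lemma power_i_4: "\<i> ^ 4 = 1"
  by (simp add: numeral_eq_Suc)

lemma power_i_mod_4: "\<i> ^ k = \<i> ^ (k mod 4)"
proof -
  have "\<i> ^ k = \<i> ^ (4 * (k div 4) + k mod 4)" by simp
  also have "\<dots> = (\<i> ^ 4) ^ (k div 4) * \<i> ^ (k mod 4)" by (simp only: power_add power_mult)
  also have "\<dots> = \<i> ^ (k mod 4)" using power_i_4 by simp
  finally show ?thesis .
qed

lemma P_phase_add: "P_phase n (\<lambda>j. (a j + b j) mod 4) y = P_phase n a y * P_phase n b y"
proof -
  have "\<i> ^ ((a j + b j) mod 4 * (if y j then 1 else 0)) =
        \<i> ^ (a j * (if y j then 1 else 0)) * \<i> ^ (b j * (if y j then 1 else 0))" for j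
    using power_i_mod_4[of "a j + b j"] by (simp add: power_add)
  then show ?thesis unfolding P_phase_def by (simp add: prod.distrib)
qed

lemma cz_circuit_sign_append:
  "cz_circuit_sign (zs @ ws) y = cz_circuit_sign zs y * cz_circuit_sign ws y"
  by (induction zs) auto

lemma PCZ_phase_cong: "PCZ_phase n \<phi> \<Longrightarrow> \<forall>y\<in>basis n. \<psi> y = \<phi> y \<Longrightarrow> PCZ_phase n \<psi>"
  unfolding PCZ_phase_def by metis

lemma PCZ_phase_P_phase: "\<forall>j<n. a j < 4 \<Longrightarrow> PCZ_phase n (P_phase n a)"
  unfolding PCZ_phase_def by (intro exI[of _ a] exI[of _ "[]"]) (simp add: valid_pairs_def)

lemma PCZ_phase_one: "PCZ_phase n (\<lambda>_. 1)"
proof -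
  have "P_phase n (\<lambda>_. 0) = (\<lambda>_. 1)" by (simp add: P_phase_def fun_eq_iff)
  then show ?thesis using PCZ_phase_P_phase[of n "\<lambda>_. 0"] by simp
qed

lemma PCZ_phase_cz_sign: "j < n \<Longrightarrow> k < n \<Longrightarrow> j \<noteq> k \<Longrightarrow> PCZ_phase n (cz_sign j k)"
  unfolding PCZ_phase_def
  by (intro exI[of _ "\<lambda>_. 0"] exI[of _ "[(j,k)]"]) (simp add: valid_pairs_def P_phase_def)

lemma PCZ_phase_mult:
  assumes "PCZ_phase n \<phi>" "PCZ_phase n \<psi>"
  shows "PCZ_phase n (\<lambda>y. \<phi> y * \<psi> y)"
proof -
  obtain a zs b ws where
    "\<forall>j<n. a j < 4" "valid_pairs n zs" "\<forall>y\<in>basis n. \<phi> y = P_phase n a y * cz_circuit_sign zs y"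
    "\<forall>j<n. b j < 4" "valid_pairs n ws" "\<forall>y\<in>basis n. \<psi> y = P_phase n b y * cz_circuit_sign ws y"
    using assms unfolding PCZ_phase_def by blast
  then show ?thesis
    unfolding PCZ_phase_def
    by (intro exI[of _ "\<lambda>j. (a j + b j) mod 4"] exI[of _ "zs @ ws"])
       (auto simp: valid_pairs_def P_phase_add cz_circuit_sign_append)
qed

lemma PCZ_phase_power: "PCZ_phase n \<phi> \<Longrightarrow> PCZ_phase n (\<lambda>y. \<phi> y ^ e)"
  by (induction e) (auto intro: PCZ_phase_one PCZ_phase_mult)

lemma PCZ_phase_prod:
  "\<forall>j<(m::nat). PCZ_phase n (f j) \<Longrightarrow> PCZ_phase n (\<lambda>y. \<Prod>j<m. f j y)"
  by (induction m) (auto intro: PCZ_phase_one PCZ_phase_mult)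

lemma PCZ_phase_i_power_bit:
  assumes "j < n"
  shows "PCZ_phase n (\<lambda>y. \<i> ^ (e * (if y j then 1 else 0)))"
proof -
  let ?a = "\<lambda>l. if l = j then e mod 4 else 0"
  have "P_phase n ?a = (\<lambda>y. \<i> ^ (e * (if y j then 1 else 0)))"
  proof
    fix y
    have "P_phase n ?a y = (\<Prod>l<n. if l = j then \<i> ^ (e mod 4 * (if y j then 1 else 0)) else 1)"
      unfolding P_phase_def by (rule prod.cong) auto
    also have "\<dots> = \<i> ^ (e mod 4 * (if y j then 1 else 0))" using assms by simp
    also have "\<dots> = \<i> ^ (e * (if y j then 1 else 0))" using power_i_mod_4[of e] by simp
    finally show "P_phase n ?a y = \<i> ^ (e * (if y j then 1 else 0))" .
  qed
  then show ?thesis using PCZ_phase_P_phase[of n ?a] by simp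
qed

section \<open>Pulling phases back along CNOT circuits\<close>

lemma PCZ_phase_i_power_bit_cnot_map:
  assumes "j < n" "c < n" "t < n" "c \<noteq> t"
  shows "PCZ_phase n (\<lambda>y. \<i> ^ (e * (if cnot_map c t y j then 1 else 0)))"
proof (cases "j = t")
  case False
  then show ?thesis using PCZ_phase_i_power_bit[OF assms(1)] by (simp add: cnot_map_def)
next
  case True
  have "\<i> ^ e * \<i> ^ e * (-1) ^ e = (\<i> * \<i> * (-1::complex)) ^ e"
    by (simp only: power_mult_distrib)
  then have "\<i> ^ e * \<i> ^ e * (-1) ^ e = (1::complex)"
    by simp
  then have "\<i> ^ (e * (if cnot_map c t y j then 1 else 0)) =
     \<i> ^ (e * (if y t then 1 else 0)) * \<i> ^ (e * (if y c then 1 else 0)) * cz_sign t c y ^ e" for y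
    using True by (cases "y t"; cases "y c") (auto simp: cnot_map_def cz_sign_def)
  then show ?thesis
    by (simp only:) (intro PCZ_phase_mult PCZ_phase_power PCZ_phase_i_power_bit PCZ_phase_cz_sign; use assms in auto)
qed

lemma cz_sign_commute: "cz_sign j k = cz_sign k j"
  by (auto simp: cz_sign_def fun_eq_iff)

lemma PCZ_phase_cz_sign_cnot_map:
  assumes "j < n" "k < n" "j \<noteq> k" "c < n" "t < n" "c \<noteq> t"
  shows "PCZ_phase n (\<lambda>y. cz_sign j k (cnot_map c t y))"
proof -
  have on_target: "PCZ_phase n (\<lambda>y. cz_sign t l (cnot_map c t y))" if "l < n" "l \<noteq> t" for l
  proof (cases "l = c")
    case True
    then have "cz_sign t l (cnot_map c t y) = cz_sign t c y * \<i> ^ (2 * (if y c then 1 else 0))" for y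
      by (cases "y t"; cases "y c") (auto simp: cnot_map_def cz_sign_def)
    then show ?thesis
      by (simp only:) (intro PCZ_phase_mult PCZ_phase_cz_sign PCZ_phase_i_power_bit; use assms in auto)
  next
    case False
    then have "cz_sign t l (cnot_map c t y) = cz_sign t l y * cz_sign c l y" for y
      using that by (cases "y t"; cases "y c"; cases "y l") (auto simp: cnot_map_def cz_sign_def)
    then show ?thesis
      by (simp only:) (intro PCZ_phase_mult PCZ_phase_cz_sign; use assms that False in auto)
  qed
  consider "j = t" | "k = t" | "j \<noteq> t" "k \<noteq> t" by blast
  then show ?thesis
  proof cases
    case 1
    then show ?thesis using on_target assms by auto
  next
    case 2
    then show ?thesis using on_target[of j] assms by (simp add: cz_sign_commute[of j])
  next
    case 3
    then have "cz_sign j k (cnot_map c t y) = cz_sign j k y" for y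
      by (simp add: cnot_map_def cz_sign_def)
    then show ?thesis using PCZ_phase_cz_sign assms by simp
  qed
qed

lemma PCZ_phase_cz_circuit_sign_cnot_map:
  assumes "valid_pairs n zs" "c < n" "t < n" "c \<noteq> t"
  shows "PCZ_phase n (\<lambda>y. cz_circuit_sign zs (cnot_map c t y))"
  using assms(1)
proof (induction zs)
  case Nil
  then show ?case by (simp add: PCZ_phase_one)
next
  case (Cons jk zs)
  obtain j k where jk: "jk = (j,k)" by (cases jk)
  have "PCZ_phase n (\<lambda>y. cz_sign j k (cnot_map c t y))"
    using Cons.prems jk assms by (intro PCZ_phase_cz_sign_cnot_map) (auto simp: valid_pairs_def)
  moreover have "PCZ_phase n (\<lambda>y. cz_circuit_sign zs (cnot_map c t y))"
    using Cons by (simp add: valid_pairs_def)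
  ultimately show ?case using jk by (simp add: PCZ_phase_mult)
qed

lemma PCZ_phase_comp_cnot_map:
  assumes "PCZ_phase n \<phi>" "c < n" "t < n" "c \<noteq> t"
  shows "PCZ_phase n (\<phi> \<circ> cnot_map c t)"
proof -
  obtain a zs where a: "\<forall>j<n. a j < 4" and zs: "valid_pairs n zs"
    and \<phi>: "\<forall>y\<in>basis n. \<phi> y = P_phase n a y * cz_circuit_sign zs y"
    using assms(1) unfolding PCZ_phase_def by blast
  have "PCZ_phase n (\<lambda>y. P_phase n a (cnot_map c t y) * cz_circuit_sign zs (cnot_map c t y))"
    unfolding P_phase_def
    by (intro PCZ_phase_mult PCZ_phase_prod allI impI PCZ_phase_i_power_bit_cnot_map
          PCZ_phase_cz_circuit_sign_cnot_map) (use assms a zs in auto)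
  then show ?thesis
    by (rule PCZ_phase_cong) (use \<phi> cnot_map_basis assms in auto)
qed

lemma PCZ_phase_comp_cnot_circuit_map:
  "valid_pairs n gs \<Longrightarrow> PCZ_phase n \<phi> \<Longrightarrow> PCZ_phase n (\<phi> \<circ> cnot_circuit_map gs)"
proof (induction gs arbitrary: \<phi> rule: cnot_circuit_map.induct)
  case 1
  then show ?case by simp
next
  case (2 c t gs)
  then have "valid_pairs n gs" "PCZ_phase n (\<phi> \<circ> cnot_map c t)"
    by (auto simp: valid_pairs_def intro!: PCZ_phase_comp_cnot_map)
  then have "PCZ_phase n (\<phi> \<circ> cnot_map c t \<circ> cnot_circuit_map gs)"
    by (rule "2.IH")
  then show ?case by (simp add: comp_def)
qed

lemma PC_prod_monomial:
  assumes "\<forall>j<k. is_P_layer n (L j)" "\<forall>j<k. is_C_layer n (C j)"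
  shows "\<exists>gs \<phi>. valid_pairs n gs \<and> PCZ_phase n \<phi> \<and>
           op_eq n (PC_prod n L C k) (monomial_op (cnot_circuit_map gs) \<phi>)"
  using assms
proof (induction k)
  case 0
  show ?case
    by (intro exI[of _ "[]"] exI[of _ "\<lambda>_. 1"])
       (simp add: valid_pairs_def PCZ_phase_one op_eq_def op_id_def monomial_op_def)
next
  case (Suc k)
  then obtain gs \<phi> where gs: "valid_pairs n gs" and \<phi>: "PCZ_phase n \<phi>"
    and IH: "op_eq n (PC_prod n L C k) (monomial_op (cnot_circuit_map gs) \<phi>)"
    by auto
  obtain a where a: "\<forall>j<n. a j < 4" "L k = P_layer n a"
    using Suc.prems(1) unfolding is_P_layer_def by auto
  obtain hs where hs: "valid_pairs n hs" "C k = gate_prod n (map (\<lambda>(c,t). CNOT c t) hs)"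
    using Suc.prems(2) unfolding is_C_layer_def valid_pairs_def by auto
  define \<psi> where "\<psi> y = P_phase n a (cnot_circuit_map gs y) * \<phi> y" for y
  have gs_basis: "\<forall>y\<in>basis n. cnot_circuit_map gs y \<in> basis n"
    using cnot_circuit_map_basis[OF gs] by blast
  have "op_eq n (op_mult n (L k) (PC_prod n L C k)) (monomial_op (cnot_circuit_map gs) \<psi>)"
    using op_eq_trans[OF op_eq_op_mult_cong[OF op_eq_refl IH]
        op_eq_op_mult_monomial_op[OF gs_basis, of id "P_phase n a" \<phi>]]
    by (simp add: a(2) P_layer_monomial \<psi>_def[abs_def])
  then have "op_eq n (PC_prod n L C (Suc k)) (monomial_op (cnot_circuit_map (hs @ gs)) \<psi>)"
    using op_eq_trans[OF op_eq_op_mult_cong[OF C_layer_monomial[OF hs(1)]]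
        op_eq_op_mult_monomial_op[OF gs_basis, of "cnot_circuit_map hs" "\<lambda>_. 1" \<psi>]]
    by (simp add: hs(2) cnot_circuit_map_append)
  moreover have "PCZ_phase n \<psi>"
    unfolding \<psi>_def using PCZ_phase_mult[OF PCZ_phase_comp_cnot_circuit_map[OF gs PCZ_phase_P_phase[OF a(1)]] \<phi>]
    by (simp add: comp_def)
  moreover have "valid_pairs n (hs @ gs)"
    using gs hs(1) by (auto simp: valid_pairs_def)
  ultimately show ?case by blast
qed

lemma CZ_P_layers_monomial:
  assumes "valid_pairs n gs"
  shows "op_eq n (op_mult n (gate_prod n (map (\<lambda>(c,t). CNOT c t) gs))
                   (op_mult n (gate_prod n (map (\<lambda>(j,k). CZ j k) zs)) (P_layer n a)))
                 (monomial_op (cnot_circuit_map gs) (\<lambda>y. P_phase n a y * cz_circuit_sign zs y))"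
proof -
  have "op_eq n (op_mult n (gate_prod n (map (\<lambda>(j,k). CZ j k) zs)) (P_layer n a))
      (monomial_op id (\<lambda>y. P_phase n a y * cz_circuit_sign zs y))"
    using op_eq_trans[OF op_eq_op_mult_cong[OF CZ_layer_monomial op_eq_refl]
        op_eq_op_mult_monomial_op[of n id id "cz_circuit_sign zs" "P_phase n a"]]
    by (simp add: P_layer_monomial mult.commute)
  then show ?thesis
    using op_eq_trans[OF op_eq_op_mult_cong[OF C_layer_monomial[OF assms]]
        op_eq_op_mult_monomial_op[of n id "cnot_circuit_map gs" "\<lambda>_. 1"]]
    by simp
qed

theorem theorem1:
  fixes n m :: nat and L C :: "nat \<Rightarrow> op"
  assumes "n \<ge> 1" and "m \<ge> 1"
    and "\<forall>k<m. is_P_layer n (L k)"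
    and "\<forall>k<m. is_C_layer n (C k)"
  shows "\<exists>L' Z' C'. is_P_layer n L' \<and> is_CZ_layer n Z' \<and> is_C_layer n C' \<and>
           op_eq n (PC_prod n L C m) (op_mult n C' (op_mult n Z' L'))"
proof -
  obtain gs \<phi> where gs: "valid_pairs n gs" and "PCZ_phase n \<phi>"
    and PC: "op_eq n (PC_prod n L C m) (monomial_op (cnot_circuit_map gs) \<phi>)"
    using PC_prod_monomial assms(3,4) by blast
  then obtain a zs where a: "\<forall>j<n. a j < 4" and zs: "valid_pairs n zs"
    and \<phi>: "\<forall>y\<in>basis n. \<phi> y = P_phase n a y * cz_circuit_sign zs y"
    unfolding PCZ_phase_def by blast
  let ?C = "gate_prod n (map (\<lambda>(c,t). CNOT c t) gs)"
  let ?Z = "gate_prod n (map (\<lambda>(j,k). CZ j k) zs)"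
  have "op_eq n (PC_prod n L C m) (op_mult n ?C (op_mult n ?Z (P_layer n a)))"
    using op_eq_trans[OF PC op_eq_monomial_op_cong[OF \<phi>]] op_eq_sym[OF CZ_P_layers_monomial[OF gs]]
    by (rule op_eq_trans)
  moreover have "is_P_layer n (P_layer n a)" "is_CZ_layer n ?Z" "is_C_layer n ?C"
    using a gs zs unfolding is_P_layer_def is_CZ_layer_def is_C_layer_def valid_pairs_def by auto
  ultimately show ?thesis by blast
qed

end
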